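(* Let $R$ be a ring, $M$ a nonzero left $R$-module, $\Omega$ an infinite set, $N$ either $\bigoplus_{i\in\Omega} M$ or $\prod_{i\in\Omega} M$, and $E=\mathrm{End}_R(N)$. Suppose that $U\subseteq E$ is a subset for which there exists a moiety $\Sigma\subseteq\Omega$ that is full with respect to $U$. Then there exist elements $x,y\in E$ such that $$E = yUy + yUyx + xyUy + xyUyx,$$ that is, every $f\in E$ can be written as $f = y u_1 y + y u_2 y x + x y u_3 y + x y u_4 y x$ for some $u_1,u_2,u_3,u_4\in U$.
   Context: Rings are unital and associative. Endomorphisms are written on the right of their arguments, so the product $fg$ in $E$ means "first $f$, then $g$". For $\Sigma\subseteq\Omega$, $M^{\Sigma}$ denotes the $R$-submodule of $N$ consisting of elements supported on the coordinates in $\Sigma$ (so $N = M^{\Sigma}\oplus M^{\Omega\setminus\Sigma}$). For $U\subseteq E$, let $U_{\{\Sigma\}}=\{f\in U : M^{\Sigma}f\subseteq M^{\Sigma},\ M^{\Omega\setminus\Sigma}f\subseteq M^{\Omega\setminus\Sigma}\}$. A subset $\Sigma\subseteq\Omega$ is called full with respect to $U\subseteq E$ if every $R$-endomorphism of $M^{\Sigma}$ is the restriction to $M^{\Sigma}$ of some member of $U_{\{\Sigma\}}$. A subset $\Sigma\subseteq\Omega$ is a moiety if $|\Sigma|=|\Omega|=|\Omega\setminus\Sigma|$. For subsets $A,B\subseteq E$, $A+B=\{a+b : a\in A, b\in B\}$ and $yAy=\{yay : a\in A\}$, etc. *)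

theory Defs
  imports "HOL-Library.Equipollence"
begin

definition left_module :: "('r::ring_1 \<Rightarrow> 'm::ab_group_add \<Rightarrow> 'm) \<Rightarrow> bool" where
  "left_module s \<longleftrightarrow>
     (\<forall>r a b. s r (a + b) = s r a + s r b) \<and>
     (\<forall>r t a. s (r + t) a = s r a + s t a) \<and>
     (\<forall>r t a. s (r * t) a = s r (s t a)) \<and>
     (\<forall>a. s 1 a = a)"

definition prod_mod :: "'i set \<Rightarrow> ('i \<Rightarrow> 'm::zero) set" where
  "prod_mod \<Omega> = {v. \<forall>i. i \<notin> \<Omega> \<longrightarrow> v i = 0}"

definition dsum_mod :: "'i set \<Rightarrow> ('i \<Rightarrow> 'm::zero) set" where
  "dsum_mod \<Omega> = {v \<in> prod_mod \<Omega>. finite {i. v i \<noteq> 0}}"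

definition supp_sub :: "('i \<Rightarrow> 'm::zero) set \<Rightarrow> 'i set \<Rightarrow> ('i \<Rightarrow> 'm) set" where
  "supp_sub N \<Sigma> = {v \<in> N. \<forall>i. i \<notin> \<Sigma> \<longrightarrow> v i = 0}"

definition is_endo :: "('r \<Rightarrow> 'm::ab_group_add \<Rightarrow> 'm) \<Rightarrow> ('i \<Rightarrow> 'm) set
    \<Rightarrow> (('i \<Rightarrow> 'm) \<Rightarrow> ('i \<Rightarrow> 'm)) \<Rightarrow> bool" where
  "is_endo s S f \<longleftrightarrow>
     (\<forall>v\<in>S. f v \<in> S) \<and>
     (\<forall>v\<in>S. \<forall>w\<in>S. f (\<lambda>i. v i + w i) = (\<lambda>i. f v i + f w i)) \<and>
     (\<forall>r. \<forall>v\<in>S. f (\<lambda>i. s r (v i)) = (\<lambda>i. s r (f v i)))"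

text \<open>E = End_R(N), as extensional functions (value 0 outside N).\<close>
definition End :: "('r \<Rightarrow> 'm::ab_group_add \<Rightarrow> 'm) \<Rightarrow> ('i \<Rightarrow> 'm) set
    \<Rightarrow> (('i \<Rightarrow> 'm) \<Rightarrow> ('i \<Rightarrow> 'm)) set" where
  "End s N = {f. is_endo s N f \<and> (\<forall>v. v \<notin> N \<longrightarrow> f v = (\<lambda>i. 0))}"

definition stab :: "(('i \<Rightarrow> 'm::zero) \<Rightarrow> ('i \<Rightarrow> 'm)) set \<Rightarrow> ('i \<Rightarrow> 'm) set \<Rightarrow> 'i set \<Rightarrow> 'i set
    \<Rightarrow> (('i \<Rightarrow> 'm) \<Rightarrow> ('i \<Rightarrow> 'm)) set" where
  "stab U N \<Omega> \<Sigma> = {f \<in> U. f ` supp_sub N \<Sigma> \<subseteq> supp_sub N \<Sigma> \<and>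
                         f ` supp_sub N (\<Omega> - \<Sigma>) \<subseteq> supp_sub N (\<Omega> - \<Sigma>)}"

definition full :: "('r \<Rightarrow> 'm::ab_group_add \<Rightarrow> 'm) \<Rightarrow> ('i \<Rightarrow> 'm) set \<Rightarrow> 'i set
    \<Rightarrow> (('i \<Rightarrow> 'm) \<Rightarrow> ('i \<Rightarrow> 'm)) set \<Rightarrow> 'i set \<Rightarrow> bool" where
  "full s N \<Omega> U \<Sigma> \<longleftrightarrow>
     (\<forall>g. is_endo s (supp_sub N \<Sigma>) g \<longrightarrow>
        (\<exists>f\<in>stab U N \<Omega> \<Sigma>. \<forall>v\<in>supp_sub N \<Sigma>. f v = g v))"

definition moiety :: "'i set \<Rightarrow> 'i set \<Rightarrow> bool" where
  "moiety \<Omega> \<Sigma> \<longleftrightarrow> \<Sigma> \<subseteq> \<Omega> \<and> \<Sigma> \<approx> \<Omega> \<and> (\<Omega> - \<Sigma>) \<approx> \<Omega>"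

end

theory Submission
  imports Defs
begin

text \<open>Choose an involution t of \<Omega> exchanging \<Sigma> and \<Omega> - \<Sigma>, let x be the induced
  permutation of coordinates and y the projection of N onto M^\<Sigma>. Then x y x is the
  complementary projection, so every f \<in> E splits into the four corners
  y f y + y f (x y x) + (x y x) f y + (x y x) f (x y x), and each corner has the shape
  y g y up to outer factors x, with g one of f, f x, x f, x f x. Fullness of \<Sigma> yields u \<in> U
  with y u y = y g y.\<close>

definition coordinate_module :: "'i set \<Rightarrow> ('i \<Rightarrow> 'm::zero) set \<Rightarrow> bool" where
  "coordinate_module \<Omega> N \<longleftrightarrow> N = prod_mod \<Omega> \<or> N = dsum_mod \<Omega>"

definition coord_proj :: "('i \<Rightarrow> 'm::zero) set \<Rightarrow> 'i set \<Rightarrow> ('i \<Rightarrow> 'm) \<Rightarrow> ('i \<Rightarrow> 'm)" where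
  "coord_proj N A v = (if v \<in> N then (\<lambda>i. if i \<in> A then v i else 0) else (\<lambda>i. 0))"

definition reindex :: "('i \<Rightarrow> 'm::zero) set \<Rightarrow> ('i \<Rightarrow> 'i) \<Rightarrow> ('i \<Rightarrow> 'm) \<Rightarrow> ('i \<Rightarrow> 'm)" where
  "reindex N t v = (if v \<in> N then (\<lambda>i. v (t i)) else (\<lambda>i. 0))"

lemma left_module_scale_zero: "left_module s \<Longrightarrow> s r 0 = 0"
  unfolding left_module_def by (metis add_cancel_right_right)

lemma eqpoll_disjoint_swap:
  assumes "A \<inter> B = {}" "A \<approx> B"
  obtains t where "\<And>i. t (t i) = i" "\<And>i. i \<in> A \<Longrightarrow> t i \<in> B" "\<And>i. i \<in> B \<Longrightarrow> t i \<in> A"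
    "\<And>i. i \<notin> A \<union> B \<Longrightarrow> t i = i"
proof -
  obtain h where h: "bij_betw h A B" using assms(2) by (auto simp: eqpoll_def)
  define t where "t i = (if i \<in> A then h i else if i \<in> B then inv_into A h i else i)" for i
  have AB: "t i \<in> B" if "i \<in> A" for i
    using that h by (auto simp: t_def bij_betw_def)
  have BA: "t i \<in> A" if "i \<in> B" for i
    using that h assms(1) by (auto simp: t_def bij_betw_def inv_into_into)
  have "t (t i) = i" for i
    using AB BA h assms(1) by (auto simp: t_def bij_betw_def f_inv_into_f)
  moreover have "t i = i" if "i \<notin> A \<union> B" for i
    using that by (simp add: t_def)
  ultimately show ?thesis using that AB BA by blast
qed

lemma coordinate_module_zero: "coordinate_module \<Omega> N \<Longrightarrow> (\<lambda>i. 0) \<in> N"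
  by (auto simp: coordinate_module_def prod_mod_def dsum_mod_def)

lemma coordinate_module_vanishes: "coordinate_module \<Omega> N \<Longrightarrow> v \<in> N \<Longrightarrow> i \<notin> \<Omega> \<Longrightarrow> v i = 0"
  by (auto simp: coordinate_module_def prod_mod_def dsum_mod_def)

lemma coordinate_module_support_mono:
  assumes "coordinate_module \<Omega> N" "v \<in> N" "\<And>i. v i = 0 \<Longrightarrow> w i = 0"
  shows "w \<in> N"
proof -
  have "{i. w i \<noteq> 0} \<subseteq> {i. v i \<noteq> 0}" using assms(3) by blast
  then show ?thesis using assms
    by (auto simp: coordinate_module_def prod_mod_def dsum_mod_def intro: finite_subset)
qed

lemma coordinate_module_add:
  fixes v w :: "'i \<Rightarrow> 'm::comm_monoid_add"
  assumes "coordinate_module \<Omega> N" "v \<in> N" "w \<in> N"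
  shows "(\<lambda>i. v i + w i) \<in> N"
proof -
  have "{i. v i + w i \<noteq> 0} \<subseteq> {i. v i \<noteq> 0} \<union> {i. w i \<noteq> 0}" by auto
  then show ?thesis using assms
    by (auto simp: coordinate_module_def prod_mod_def dsum_mod_def intro: finite_subset)
qed

lemma coordinate_module_reindex:
  assumes "coordinate_module \<Omega> N" "v \<in> N"
    and "\<And>i. t (t i) = i" "\<And>i. i \<notin> \<Omega> \<Longrightarrow> t i = i"
  shows "(\<lambda>i. v (t i)) \<in> N"
proof -
  have "{i. v (t i) \<noteq> 0} = t ` {i. v i \<noteq> 0}"
    using assms(3) by (auto intro!: image_eqI[where x="t _"])
  then show ?thesis using assms
    by (auto simp: coordinate_module_def prod_mod_def dsum_mod_def)
qed

lemma End_closed: "f \<in> End s N \<Longrightarrow> v \<in> N \<Longrightarrow> f v \<in> N"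
  by (simp add: End_def is_endo_def)

lemma End_outside: "f \<in> End s N \<Longrightarrow> v \<notin> N \<Longrightarrow> f v = (\<lambda>i. 0)"
  by (simp add: End_def)

lemma End_add:
  "f \<in> End s N \<Longrightarrow> v \<in> N \<Longrightarrow> w \<in> N \<Longrightarrow> f (\<lambda>i. v i + w i) = (\<lambda>i. f v i + f w i)"
  by (simp add: End_def is_endo_def)

lemma End_zero:
  assumes "f \<in> End s N" "(\<lambda>i. 0) \<in> N"
  shows "f (\<lambda>i. 0) = (\<lambda>i. 0)"
proof -
  have "f (\<lambda>i. 0) = (\<lambda>i. f (\<lambda>i. 0) i + f (\<lambda>i. 0) i)"
    using End_add[OF assms(1) assms(2) assms(2)] by simp
  then show ?thesis by (metis add_cancel_left_left)
qed

lemma End_comp: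
  assumes "f \<in> End s N" "g \<in> End s N" "(\<lambda>i. 0) \<in> N"
  shows "(\<lambda>v. g (f v)) \<in> End s N"
  using assms End_zero[OF assms(2,3)] unfolding End_def is_endo_def by auto

lemma End_restrict_is_endo:
  assumes "f \<in> End s N" "S \<subseteq> N" "\<And>v. v \<in> S \<Longrightarrow> f v \<in> S"
  shows "is_endo s S f"
  using assms unfolding End_def is_endo_def by blast

lemma coord_proj_End:
  assumes "left_module s" "coordinate_module \<Omega> N"
  shows "coord_proj N A \<in> End s N"
proof -
  have closed: "(\<lambda>i. if i \<in> A then v i else 0) \<in> N" if "v \<in> N" for v
    using coordinate_module_support_mono[OF assms(2) that] by simp
  have "(\<lambda>i. s r (v i)) \<in> N" if "v \<in> N" for r v
    using coordinate_module_support_mono[OF assms(2) that] left_module_scale_zero[OF assms(1)]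
    by simp
  then show ?thesis
    using closed coordinate_module_add[OF assms(2)] left_module_scale_zero[OF assms(1)]
    unfolding End_def is_endo_def coord_proj_def by auto
qed

lemma reindex_End:
  assumes "left_module s" "coordinate_module \<Omega> N"
    and "\<And>i. t (t i) = i" "\<And>i. i \<notin> \<Omega> \<Longrightarrow> t i = i"
  shows "reindex N t \<in> End s N"
proof -
  have "(\<lambda>i. s r (v i)) \<in> N" if "v \<in> N" for r v
    using coordinate_module_support_mono[OF assms(2) that] left_module_scale_zero[OF assms(1)]
    by simp
  then show ?thesis
    using coordinate_module_reindex[OF assms(2) _ assms(3,4)] coordinate_module_add[OF assms(2)]
    unfolding End_def is_endo_def reindex_def by auto
qed

lemma coord_proj_in_supp_sub:
  "coordinate_module \<Omega> N \<Longrightarrow> coord_proj N A v \<in> supp_sub N A"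
  using coordinate_module_support_mono[of \<Omega> N v "\<lambda>i. if i \<in> A then v i else 0"]
  by (auto simp: coord_proj_def supp_sub_def coordinate_module_zero)

lemma coord_proj_fixes_supp_sub: "w \<in> supp_sub N A \<Longrightarrow> coord_proj N A w = w"
  by (auto simp: coord_proj_def supp_sub_def)

lemma coord_proj_cong:
  assumes "coordinate_module \<Omega> N" "A \<inter> \<Omega> = B \<inter> \<Omega>"
  shows "coord_proj N A = coord_proj N B"
  using assms coordinate_module_vanishes[OF assms(1)] by (auto simp: coord_proj_def fun_eq_iff)

lemma coord_proj_add_complement:
  fixes v :: "'i \<Rightarrow> 'm::monoid_add"
  assumes "coordinate_module \<Omega> N" "v \<in> N"
  shows "(\<lambda>i. coord_proj N A v i + coord_proj N (\<Omega> - A) v i) = v"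
  using assms coordinate_module_vanishes[OF assms] by (auto simp: coord_proj_def fun_eq_iff)

lemma reindex_coord_proj_reindex:
  assumes "coordinate_module \<Omega> N" "v \<in> N"
    and "\<And>i. t (t i) = i" "\<And>i. i \<notin> \<Omega> \<Longrightarrow> t i = i"
  shows "reindex N t (coord_proj N A (reindex N t v)) = coord_proj N {i. t i \<in> A} v"
proof -
  have "(\<lambda>i. v (t i)) \<in> N" using coordinate_module_reindex[OF assms] .
  moreover have "(\<lambda>i. if i \<in> A then v (t i) else 0) \<in> N"
    using coordinate_module_support_mono[OF assms(1) calculation] by simp
  ultimately show ?thesis
    using assms(2) by (auto simp: reindex_def coord_proj_def fun_eq_iff assms(3))
qed

lemma full_compress:
  assumes "left_module s" "coordinate_module \<Omega> N" "full s N \<Omega> U \<Sigma>" "g \<in> End s N"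
  shows "\<exists>u\<in>U. \<forall>v. coord_proj N \<Sigma> (u (coord_proj N \<Sigma> v)) = coord_proj N \<Sigma> (g (coord_proj N \<Sigma> v))"
proof -
  let ?y = "coord_proj N \<Sigma>" and ?S = "supp_sub N \<Sigma>"
  have yS: "?y v \<in> ?S" for v
    using coord_proj_in_supp_sub[OF assms(2)] .
  have yg: "(\<lambda>v. ?y (g v)) \<in> End s N"
    using End_comp[OF assms(4) coord_proj_End[OF assms(1,2)] coordinate_module_zero[OF assms(2)]] .
  have "is_endo s ?S (\<lambda>v. ?y (g v))"
    by (rule End_restrict_is_endo[OF yg], force simp: supp_sub_def, rule yS)
  then obtain u where u_stab: "u \<in> stab U N \<Omega> \<Sigma>" and u: "\<And>w. w \<in> ?S \<Longrightarrow> u w = ?y (g w)"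
    using assms(3) unfolding full_def by blast
  have "?y (u (?y v)) = ?y (g (?y v))" for v
    using u[OF yS] coord_proj_fixes_supp_sub[OF yS[of "g (?y v)"]] by simp
  moreover have "u \<in> U"
    using u_stab by (simp add: stab_def)
  ultimately show ?thesis
    by blast
qed

lemma End_corner_decomposition:
  assumes "(\<lambda>i. 0) \<in> N" "f \<in> End s N" "x \<in> End s N" "y \<in> End s N"
    and split: "\<And>v. v \<in> N \<Longrightarrow> (\<lambda>i. y v i + x (y (x v)) i) = v"
  shows "f v = (\<lambda>i. y (f (y v)) i + x (y (x (f (y v)))) i
                   + y (f (x (y (x v)))) i + x (y (x (f (x (y (x v)))))) i)"
proof (cases "v \<in> N")
  case True
  let ?a = "y v" and ?b = "x (y (x v))"
  have a: "?a \<in> N" and b: "?b \<in> N"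
    using True End_closed assms(3,4) by blast+
  have "f v = (\<lambda>i. f ?a i + f ?b i)"
    using End_add[OF assms(2) a b] split[OF True] by simp
  also have "\<dots> = (\<lambda>i. (y (f ?a) i + x (y (x (f ?a))) i) + (y (f ?b) i + x (y (x (f ?b))) i))"
    using split[OF End_closed[OF assms(2) a]] split[OF End_closed[OF assms(2) b]]
    by (simp add: fun_eq_iff)
  finally show ?thesis by (simp add: add.assoc)
next
  case False
  then have "f v = (\<lambda>i. 0)" "x v = (\<lambda>i. 0)" "y v = (\<lambda>i. 0)"
    using End_outside assms(2-4) by blast+
  then show ?thesis
    using End_zero[OF assms(2) assms(1)] End_zero[OF assms(3) assms(1)]
      End_zero[OF assms(4) assms(1)] by simp
qed

lemma moiety_swap_involution:
  assumes "moiety \<Omega> \<Sigma>"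
  obtains t where "\<And>i. t (t i) = i" "\<And>i. i \<notin> \<Omega> \<Longrightarrow> t i = i"
    "{i. t i \<in> \<Sigma>} \<inter> \<Omega> = (\<Omega> - \<Sigma>) \<inter> \<Omega>"
proof -
  have "\<Sigma> \<subseteq> \<Omega>" and "\<Sigma> \<approx> \<Omega> - \<Sigma>"
    using assms by (auto simp: moiety_def intro: eqpoll_trans eqpoll_sym)
  obtain t where inv: "\<And>i. t (t i) = i" and to_compl: "\<And>i. i \<in> \<Sigma> \<Longrightarrow> t i \<in> \<Omega> - \<Sigma>"
    and from_compl: "\<And>i. i \<in> \<Omega> - \<Sigma> \<Longrightarrow> t i \<in> \<Sigma>"
    and fixed: "\<And>i. i \<notin> \<Sigma> \<union> (\<Omega> - \<Sigma>) \<Longrightarrow> t i = i"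
    by (rule eqpoll_disjoint_swap[of \<Sigma> "\<Omega> - \<Sigma>"]) (use \<open>\<Sigma> \<approx> \<Omega> - \<Sigma>\<close> in auto)
  have "t i = i" if "i \<notin> \<Omega>" for i
    using fixed \<open>\<Sigma> \<subseteq> \<Omega>\<close> that by blast
  moreover have "{i. t i \<in> \<Sigma>} \<inter> \<Omega> = (\<Omega> - \<Sigma>) \<inter> \<Omega>"
    using to_compl from_compl by auto
  ultimately show ?thesis
    using that inv by blast
qed

lemma moiety_conjugate_coord_proj:
  assumes "left_module s" "coordinate_module \<Omega> N" "moiety \<Omega> \<Sigma>"
  obtains x where "x \<in> End s N"
    "\<And>v. v \<in> N \<Longrightarrow> (\<lambda>i. coord_proj N \<Sigma> v i + x (coord_proj N \<Sigma> (x v)) i) = v"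
proof -
  obtain t where inv: "\<And>i. t (t i) = i" and outside: "\<And>i. i \<notin> \<Omega> \<Longrightarrow> t i = i"
    and swap: "{i. t i \<in> \<Sigma>} \<inter> \<Omega> = (\<Omega> - \<Sigma>) \<inter> \<Omega>"
    using moiety_swap_involution[OF assms(3)] by blast
  have "reindex N t \<in> End s N"
    by (rule reindex_End[OF assms(1,2) inv outside])
  moreover have "(\<lambda>i. coord_proj N \<Sigma> v i + reindex N t (coord_proj N \<Sigma> (reindex N t v)) i) = v"
    if "v \<in> N" for v
    using reindex_coord_proj_reindex[OF assms(2) that inv outside] coord_proj_cong[OF assms(2) swap]
      coord_proj_add_complement[OF assms(2) that] by simp
  ultimately show ?thesis
    using that by blast
qed

lemma full_corner_representation:
  assumes "left_module s" "coordinate_module \<Omega> N" "full s N \<Omega> U \<Sigma>"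
    and "y = coord_proj N \<Sigma>" and x: "x \<in> End s N"
    and split: "\<And>v. v \<in> N \<Longrightarrow> (\<lambda>i. y v i + x (y (x v)) i) = v"
    and f: "f \<in> End s N"
  shows "\<exists>u1\<in>U. \<exists>u2\<in>U. \<exists>u3\<in>U. \<exists>u4\<in>U. \<forall>v.
           f v = (\<lambda>i. y (u1 (y v)) i + x (y (u2 (y v))) i
                      + y (u3 (y (x v))) i + x (y (u4 (y (x v)))) i)"
proof -
  have zero: "(\<lambda>i. 0) \<in> N" using coordinate_module_zero[OF assms(2)] .
  have y: "y \<in> End s N"
    using assms(4) coord_proj_End[OF assms(1,2)] by simp
  note compress = full_compress[OF assms(1-3), folded assms(4)]
  obtain u1 where "u1 \<in> U" and u1: "\<And>v. y (u1 (y v)) = y (f (y v))"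
    using compress[OF f] by blast
  obtain u2 where "u2 \<in> U" and u2: "\<And>v. y (u2 (y v)) = y (x (f (y v)))"
    using compress[OF End_comp[OF f x zero]] by blast
  obtain u3 where "u3 \<in> U" and u3: "\<And>v. y (u3 (y v)) = y (f (x (y v)))"
    using compress[OF End_comp[OF x f zero]] by blast
  obtain u4 where "u4 \<in> U" and u4: "\<And>v. y (u4 (y v)) = y (x (f (x (y v))))"
    using compress[OF End_comp[OF End_comp[OF x f zero] x zero]] by blast
  have "f v = (\<lambda>i. y (u1 (y v)) i + x (y (u2 (y v))) i
                 + y (u3 (y (x v))) i + x (y (u4 (y (x v)))) i)" for v
    unfolding u1 u2 u3 u4 by (rule End_corner_decomposition[OF zero f x y split])
  with \<open>u1 \<in> U\<close> \<open>u2 \<in> U\<close> \<open>u3 \<in> U\<close> \<open>u4 \<in> U\<close> show ?thesis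
    by blast
qed

theorem lemma1:
  fixes s :: "'r::ring_1 \<Rightarrow> 'm::ab_group_add \<Rightarrow> 'm"
    and \<Omega> :: "'i set"
    and N :: "('i \<Rightarrow> 'm) set"
    and U :: "(('i \<Rightarrow> 'm) \<Rightarrow> ('i \<Rightarrow> 'm)) set"
  assumes "left_module s"
    and "\<exists>m::'m. m \<noteq> 0"
    and "infinite \<Omega>"
    and "N = prod_mod \<Omega> \<or> N = dsum_mod \<Omega>"
    and "U \<subseteq> End s N"
    and "\<exists>\<Sigma>. moiety \<Omega> \<Sigma> \<and> full s N \<Omega> U \<Sigma>"
  shows "\<exists>x\<in>End s N. \<exists>y\<in>End s N. \<forall>f\<in>End s N.
           \<exists>u1\<in>U. \<exists>u2\<in>U. \<exists>u3\<in>U. \<exists>u4\<in>U. \<forall>v.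
             f v = (\<lambda>i. y (u1 (y v)) i + x (y (u2 (y v))) i
                        + y (u3 (y (x v))) i + x (y (u4 (y (x v)))) i)"
proof -
  have N: "coordinate_module \<Omega> N"
    using assms(4) by (simp add: coordinate_module_def)
  obtain \<Sigma> where moiety: "moiety \<Omega> \<Sigma>" and full: "full s N \<Omega> U \<Sigma>"
    using assms(6) by blast
  obtain x where x: "x \<in> End s N"
    and split: "\<And>v. v \<in> N \<Longrightarrow> (\<lambda>i. coord_proj N \<Sigma> v i + x (coord_proj N \<Sigma> (x v)) i) = v"
    using moiety_conjugate_coord_proj[OF assms(1) N moiety] by blast
  have y: "coord_proj N \<Sigma> \<in> End s N"
    by (rule coord_proj_End[OF assms(1) N])
  show ?thesis
    using full_corner_representation[OF assms(1) N full refl x split] x y by blast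
qed

end
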